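(* Let $A$ be a real $2\times 2$ matrix and $B$ a real $1\times 2$ matrix, and let $\mathrm{NT}=\{\vec{x}\in\mathbb{R}^2 : BA^k\vec{x}>0 \text{ for all integers } k\ge 0\}$. Suppose $A$ has a positive eigenvalue $\lambda_1$ and a negative eigenvalue $\lambda_2$ with $\lambda_1\ge|\lambda_2|$, with eigenvectors $\vec{\beta}_1,\vec{\beta}_2$ respectively, such that $B\vec{\beta}_1>0$ and $B\vec{\beta}_2>0$. Let $\vec{\alpha}\in\mathbb{R}^2$ satisfy $B\vec{\alpha}=0$ and $BA\vec{\alpha}>0$, and let $\vec{\alpha}_{-1}=A^{-1}\vec{\alpha}$. Then $\mathrm{NT}=\{k_1\vec{\alpha}+k_2\vec{\alpha}_{-1}: k_1>0,\ k_2>0\}$.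
   Context: $\mathrm{NT}$ is the non-termination set of the loop "while $(B\vec{x}>0)$ $\{\vec{x}:=A\vec{x}\}$". *)

theory Defs
  imports "HOL-Analysis.Analysis"
begin

definition matpow :: "real^'n^'n \<Rightarrow> nat \<Rightarrow> real^'n^'n" where
  "matpow A k = ((\<lambda>M. A ** M) ^^ k) (mat 1)"

text \<open>Non-termination set of the loop  while (B x > 0) { x := A x },
  B a 1 x n matrix: NT = { x. for all k \<ge> 0, B A^k x > 0 }.\<close>
definition NT :: "real^'n^'n \<Rightarrow> real^'n^1 \<Rightarrow> (real^'n) set" where
  "NT A B = {x. \<forall>k::nat. (B *v (matpow A k *v x)) $ 1 > 0}"

end

theory Submission
  imports Defs
begin

(*
  Write g x = (B x)_1 for the guard of the loop.  The proof rests on two observations.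

  (1) On the plane spanned by eigenvectors b1, b2 (eigenvalues l1 > 0 >= l2, l1 >= |l2|)
      the guard sequence is g(A^k x) = u l1^k + v l2^k, and such a sequence is positive
      for all k as soon as it is positive for k = 0 and k = 1.  Hence
      NT = {x. g x > 0 and g (A x) > 0}, an intersection of two open half-planes.

  (2) Any such intersection {g > 0, h > 0} of two half-planes of linear functionals with
      common kernel {0} is the open cone spanned by a vector a with g a = 0, h a > 0 and a
      vector e with g e > 0, h e = 0.  Here a = alpha and e = A^-1 alpha: h e = g alpha = 0,
      and g e > 0 follows again from the explicit form of the guard sequence of e.
*)

lemma matpow_Suc: "matpow A (Suc k) = A ** matpow A k"
  by (simp add: matpow_def)

lemma matpow_eigenvector:
  fixes A :: "real^'n^'n"
  assumes "A *v b = l *\<^sub>R b"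
  shows "matpow A k *v b = (l ^ k) *\<^sub>R b"
proof (induction k)
  case 0
  then show ?case by (simp add: matpow_def)
next
  case (Suc k)
  have "matpow A (Suc k) *v b = A *v (matpow A k *v b)"
    by (simp add: matpow_Suc matrix_vector_mul_assoc)
  also have "\<dots> = (l ^ Suc k) *\<^sub>R b"
    using Suc assms by (simp add: matrix_vector_mult_scaleR)
  finally show ?case .
qed

definition guard :: "real^'n^1 \<Rightarrow> real^'n \<Rightarrow> real" where
  "guard B x = (B *v x) $ 1"

lemma guard_add_scale:
  "guard B (c *\<^sub>R x + d *\<^sub>R y) = c * guard B x + d * guard B y"
  by (simp add: guard_def matrix_vector_right_distrib matrix_vector_mult_scaleR)

lemma NT_guard: "x \<in> NT A B \<longleftrightarrow> (\<forall>k. guard B (matpow A k *v x) > 0)"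
  by (simp add: NT_def guard_def)

lemma guard_matpow_eigen:
  fixes A :: "real^'n^'n"
  assumes "A *v b1 = l1 *\<^sub>R b1" and "A *v b2 = l2 *\<^sub>R b2"
  shows "guard B (matpow A k *v (c1 *\<^sub>R b1 + c2 *\<^sub>R b2))
           = c1 * guard B b1 * l1 ^ k + c2 * guard B b2 * l2 ^ k"
proof -
  have "matpow A k *v (c1 *\<^sub>R b1 + c2 *\<^sub>R b2) = (c1 * l1 ^ k) *\<^sub>R b1 + (c2 * l2 ^ k) *\<^sub>R b2"
    by (simp add: matrix_vector_right_distrib matrix_vector_mult_scaleR
        matpow_eigenvector[OF assms(1)] matpow_eigenvector[OF assms(2)])
  then show ?thesis by (simp add: guard_add_scale)
qed

lemma guard_A_eigen:
  fixes A :: "real^'n^'n"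
  assumes "A *v b1 = l1 *\<^sub>R b1" and "A *v b2 = l2 *\<^sub>R b2"
  shows "guard B (A *v (c1 *\<^sub>R b1 + c2 *\<^sub>R b2)) = c1 * guard B b1 * l1 + c2 * guard B b2 * l2"
  using guard_matpow_eigen[OF assms, of B 1 c1 c2] by (simp add: matpow_def)

lemma dominated_sum_pos:
  fixes a b L M :: real
  assumes "a > 0" "a + b > 0" "0 \<le> M" "M \<le> L" "L > 0"
  shows "a * L + b * M > 0"
proof (cases "b \<ge> 0")
  case True
  then show ?thesis using assms by (simp add: add_pos_nonneg)
next
  case False
  then have "b * L \<le> b * M" using assms by (simp add: mult_left_mono_neg)
  moreover have "(a + b) * L > 0" using assms by simp
  ultimately show ?thesis by (simp add: algebra_simps)
qed

lemma exp_sum_pos: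
  fixes u v l1 l2 :: real
  assumes "l1 > 0" "l2 \<le> 0" "\<bar>l2\<bar> \<le> l1" "u + v > 0" "u * l1 + v * l2 > 0"
  shows "u * l1 ^ k + v * l2 ^ k > 0"
proof -
  have u: "u > 0"
  proof (rule ccontr)
    assume "\<not> u > 0"
    then have "u * l1 \<le> 0" "v * l2 \<le> 0"
      using assms by (auto intro: mult_nonpos_nonneg mult_nonneg_nonpos)
    then show False using assms(5) by linarith
  qed
  define j where "j = k div 2"
  define r where "r = k mod 2"
  have split: "u * l1 ^ k + v * l2 ^ k = (u * l1 ^ r) * (l1\<^sup>2) ^ j + (v * l2 ^ r) * (l2\<^sup>2) ^ j"
  proof -
    have "k = r + 2 * j" by (simp add: j_def r_def)
    then show ?thesis by (simp add: power_add power_mult)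
  qed
  have "l2\<^sup>2 \<le> l1\<^sup>2" using assms(3) abs_le_square_iff[of l2 l1] assms(1) by simp
  then have powers: "0 \<le> (l2\<^sup>2) ^ j" "(l2\<^sup>2) ^ j \<le> (l1\<^sup>2) ^ j" "0 < (l1\<^sup>2) ^ j"
    using assms(1) by (auto intro: power_mono)
  have "r = 0 \<or> r = 1" by (auto simp: r_def)
  then have "u * l1 ^ r > 0" "u * l1 ^ r + v * l2 ^ r > 0"
    using u assms by auto
  then show ?thesis unfolding split using dominated_sum_pos powers by blast
qed

lemma exp_sum_zero_pair:
  fixes u v l1 l2 :: real
  assumes "l1 \<noteq> l2" "u + v = 0" "u * l1 + v * l2 = 0"
  shows "u = 0 \<and> v = 0"
proof -
  have "u * (l1 - l2) = (u * l1 + v * l2) - l2 * (u + v)" by (simp add: algebra_simps)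
  then have "u * (l1 - l2) = 0" using assms(2,3) by simp
  then have "u = 0" using assms(1) by simp
  then show ?thesis using assms(2) by simp
qed

lemma exp_sum_preimage_pos:
  fixes u v l1 l2 :: real
  assumes "l1 > 0" "l2 < 0" "u * l1 + v * l2 = 0" "u * l1\<^sup>2 + v * l2\<^sup>2 > 0"
  shows "u + v > 0"
proof -
  have "u * l1\<^sup>2 + v * l2\<^sup>2 = (u * l1) * (l1 - l2) + (u * l1 + v * l2) * l2"
    by (simp add: power2_eq_square algebra_simps)
  then have "u * l1\<^sup>2 + v * l2\<^sup>2 = (u * l1) * (l1 - l2)" using assms(3) by simp
  then have "u * l1 > 0" using assms(1,2,4) by (simp add: zero_less_mult_iff)
  then have "u > 0" using assms(1) by (simp add: zero_less_mult_iff)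
  have "v * l2 < 0" using \<open>u * l1 > 0\<close> assms(3) by linarith
  then have "v > 0" using assms(2) by (simp add: mult_less_0_iff)
  show ?thesis using \<open>u > 0\<close> \<open>v > 0\<close> by simp
qed

lemma NT_eigenplane_iff:
  fixes A :: "real^'n^'n"
  assumes "A *v b1 = l1 *\<^sub>R b1" "A *v b2 = l2 *\<^sub>R b2"
    and "l1 > 0" "l2 \<le> 0" "\<bar>l2\<bar> \<le> l1"
    and x: "x = c1 *\<^sub>R b1 + c2 *\<^sub>R b2"
  shows "x \<in> NT A B \<longleftrightarrow> guard B x > 0 \<and> guard B (A *v x) > 0"
proof -
  define u where "u = c1 * guard B b1"
  define v where "v = c2 * guard B b2"
  have seq: "guard B (matpow A k *v x) = u * l1 ^ k + v * l2 ^ k" for k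
    unfolding x u_def v_def using guard_matpow_eigen[OF assms(1,2)] by (simp add: algebra_simps)
  have iterates: "matpow A 0 *v x = x" "matpow A 1 *v x = A *v x" by (simp_all add: matpow_def)
  then have first_two: "guard B x = u + v" "guard B (A *v x) = u * l1 + v * l2"
    using seq[of 0] seq[of 1] by simp_all
  show ?thesis
  proof
    assume "x \<in> NT A B"
    then have "guard B (matpow A 0 *v x) > 0" "guard B (matpow A 1 *v x) > 0"
      unfolding NT_guard by blast+
    then show "guard B x > 0 \<and> guard B (A *v x) > 0" unfolding iterates by blast
  next
    assume "guard B x > 0 \<and> guard B (A *v x) > 0"
    then show "x \<in> NT A B"
      using exp_sum_pos[OF assms(3,4,5)] first_two by (simp add: NT_guard seq)
  qed
qed

lemma guard_pair_injective:
  fixes A :: "real^'n^'n"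
  assumes "A *v b1 = l1 *\<^sub>R b1" "A *v b2 = l2 *\<^sub>R b2" "l1 \<noteq> l2"
    and "guard B b1 \<noteq> 0" "guard B b2 \<noteq> 0"
    and x: "x = c1 *\<^sub>R b1 + c2 *\<^sub>R b2"
    and "guard B x = 0" "guard B (A *v x) = 0"
  shows "x = 0"
proof -
  have "c1 * guard B b1 + c2 * guard B b2 = 0"
    using assms(7) by (simp add: x guard_add_scale)
  moreover have "c1 * guard B b1 * l1 + c2 * guard B b2 * l2 = 0"
    using assms(8) guard_A_eigen[OF assms(1,2)] by (simp add: x)
  ultimately have "c1 * guard B b1 = 0 \<and> c2 * guard B b2 = 0"
    by (rule exp_sum_zero_pair[OF assms(3)])
  then show ?thesis using assms(4,5) x by simp
qed

lemma guard_preimage_pos: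
  fixes A :: "real^'n^'n"
  assumes "A *v b1 = l1 *\<^sub>R b1" "A *v b2 = l2 *\<^sub>R b2" "l1 > 0" "l2 < 0"
    and e: "e = c1 *\<^sub>R b1 + c2 *\<^sub>R b2"
    and "guard B (A *v e) = 0" "guard B (A *v (A *v e)) > 0"
  shows "guard B e > 0"
proof -
  define u where "u = c1 * guard B b1"
  define v where "v = c2 * guard B b2"
  have Ae: "A *v e = (c1 * l1) *\<^sub>R b1 + (c2 * l2) *\<^sub>R b2"
    using assms(1,2) by (simp add: e matrix_vector_right_distrib matrix_vector_mult_scaleR)
  have "u * l1 + v * l2 = 0"
    using assms(6) by (simp add: Ae guard_add_scale u_def v_def algebra_simps)
  moreover have "u * l1\<^sup>2 + v * l2\<^sup>2 > 0"
    using assms(7) guard_A_eigen[OF assms(1,2)]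
    by (simp add: Ae u_def v_def power2_eq_square algebra_simps)
  ultimately have "u + v > 0" using exp_sum_preimage_pos assms(3,4) by blast
  then show ?thesis by (simp add: e u_def v_def guard_add_scale)
qed

lemma eigenbasis_2:
  fixes A :: "real^2^2"
  assumes "b1 \<noteq> 0" "b2 \<noteq> 0" "A *v b1 = l1 *\<^sub>R b1" "A *v b2 = l2 *\<^sub>R b2" "l1 \<noteq> l2"
  obtains c1 c2 where "x = c1 *\<^sub>R b1 + c2 *\<^sub>R b2"
proof -
  have not_parallel: "b1 \<noteq> t *\<^sub>R b2" for t
  proof
    assume "b1 = t *\<^sub>R b2"
    then have "A *v b1 = l2 *\<^sub>R b1"
      using assms(4) by (simp add: matrix_vector_mult_scaleR)
    then show False using assms(1,3,5) by auto
  qed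
  have "independent {b1, b2}"
    using not_parallel assms(2) by (auto simp: independent_insert span_singleton)
  moreover have "card {b1, b2} = 2"
    using not_parallel[of 1] by simp
  ultimately have "UNIV \<subseteq> span {b1, b2}"
    using card_eq_dim[of "{b1, b2}" UNIV] by simp
  then have "x \<in> span {b1, b2}" by blast
  then show ?thesis
    using that by (auto simp: span_insert span_singleton algebra_simps)
qed

lemma eigenbasis_invertible:
  fixes A :: "real^2^2"
  assumes "A *v b1 = l1 *\<^sub>R b1" "A *v b2 = l2 *\<^sub>R b2" "l1 \<noteq> 0" "l2 \<noteq> 0"
    and basis: "\<And>x. \<exists>c1 c2. x = c1 *\<^sub>R b1 + c2 *\<^sub>R b2"
  shows "invertible A"
proof -
  have "x \<in> range ((*v) A)" for x
  proof -
    obtain c1 c2 where "x = c1 *\<^sub>R b1 + c2 *\<^sub>R b2" using basis by blast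
    then have "x = A *v ((c1 / l1) *\<^sub>R b1 + (c2 / l2) *\<^sub>R b2)"
      using assms(1-4) by (simp add: matrix_vector_right_distrib matrix_vector_mult_scaleR)
    then show ?thesis by blast
  qed
  then show ?thesis
    using matrix_right_invertible_surjective invertible_right_inverse by blast
qed

lemma matrix_inv_right_apply:
  fixes A :: "real^'n^'n"
  assumes "invertible A"
  shows "A *v (matrix_inv A *v x) = x"
proof -
  have "A ** matrix_inv A = mat 1"
    using assms unfolding invertible_def matrix_inv_def by (rule someI2_ex) auto
  then show ?thesis by (metis matrix_vector_mul_assoc matrix_vector_mul_lid)
qed

lemma open_cone_of_two_functionals:
  fixes g h :: "'a::real_vector \<Rightarrow> real"
  assumes "linear g" "linear h"
    and "g a = 0" "h a > 0" "g e > 0" "h e = 0"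
    and kernel: "\<And>z. g z = 0 \<Longrightarrow> h z = 0 \<Longrightarrow> z = 0"
  shows "{x. g x > 0 \<and> h x > 0} = {k1 *\<^sub>R a + k2 *\<^sub>R e | k1 k2. k1 > 0 \<and> k2 > 0}"
proof (intro set_eqI iffI)
  fix x assume "x \<in> {x. g x > 0 \<and> h x > 0}"
  then have x: "g x > 0" "h x > 0" by auto
  define k1 where "k1 = h x / h a"
  define k2 where "k2 = g x / g e"
  let ?z = "x - (k1 *\<^sub>R a + k2 *\<^sub>R e)"
  have "g ?z = 0" "h ?z = 0"
    using assms(1-6)
    by (simp_all add: linear_diff linear_add real_vector.linear_scale k1_def k2_def)
  then have "?z = 0" by (rule kernel)
  then have "x = k1 *\<^sub>R a + k2 *\<^sub>R e" by simp
  moreover have "k1 > 0" "k2 > 0" using x assms(4,5) by (simp_all add: k1_def k2_def)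
  ultimately show "x \<in> {k1 *\<^sub>R a + k2 *\<^sub>R e | k1 k2. k1 > 0 \<and> k2 > 0}" by blast
next
  fix x assume "x \<in> {k1 *\<^sub>R a + k2 *\<^sub>R e | k1 k2. k1 > 0 \<and> k2 > 0}"
  then obtain k1 k2 where "k1 > 0" "k2 > 0" "x = k1 *\<^sub>R a + k2 *\<^sub>R e" by blast
  then show "x \<in> {x. g x > 0 \<and> h x > 0}"
    using assms(1-6) by (simp add: linear_add real_vector.linear_scale)
qed

lemma linear_guard: "linear (guard B)"
  by (rule linearI) (simp_all add: guard_def matrix_vector_right_distrib matrix_vector_mult_scaleR)

lemma linear_guard_iterate: "linear (\<lambda>x. guard B (A *v x))"
  using linear_compose[OF matrix_vector_mul_linear linear_guard] by (simp add: o_def)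

theorem lemma9:
  fixes A :: "real^2^2" and B :: "real^2^1"
    and l1 l2 :: real and b1 b2 \<alpha> :: "real^2"
  assumes "l1 > 0" and "l2 < 0" and "l1 \<ge> \<bar>l2\<bar>"
    and "b1 \<noteq> 0" and "A *v b1 = l1 *\<^sub>R b1"
    and "b2 \<noteq> 0" and "A *v b2 = l2 *\<^sub>R b2"
    and "(B *v b1) $ 1 > 0" and "(B *v b2) $ 1 > 0"
    and "(B *v \<alpha>) $ 1 = 0" and "(B *v (A *v \<alpha>)) $ 1 > 0"
  shows "NT A B = {k1 *\<^sub>R \<alpha> + k2 *\<^sub>R (matrix_inv A *v \<alpha>) | k1 k2. k1 > 0 \<and> k2 > 0}"
proof -
  have distinct: "l1 \<noteq> l2" using assms(1,2) by simp
  have basis: "\<exists>c1 c2. x = c1 *\<^sub>R b1 + c2 *\<^sub>R b2" for x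
    using eigenbasis_2[OF assms(4,6,5,7) distinct] by metis
  have NT_half_planes: "NT A B = {x. guard B x > 0 \<and> guard B (A *v x) > 0}"
    using NT_eigenplane_iff[OF assms(5,7,1) _ assms(3)] assms(2) basis by fastforce
  define e where "e = matrix_inv A *v \<alpha>"
  have "invertible A" using eigenbasis_invertible[OF assms(5,7) _ _ basis] assms(1,2) by simp
  then have Ae: "A *v e = \<alpha>" by (simp add: e_def matrix_inv_right_apply)
  have guard_\<alpha>: "guard B \<alpha> = 0" "guard B (A *v \<alpha>) > 0"
    using assms(10,11) by (simp_all add: guard_def)
  have guard_e: "guard B e > 0" "guard B (A *v e) = 0"
  proof -
    obtain c1 c2 where "e = c1 *\<^sub>R b1 + c2 *\<^sub>R b2" using basis by blast
    then show "guard B e > 0"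
      using guard_preimage_pos[OF assms(5,7,1,2)] guard_\<alpha> Ae by simp
    show "guard B (A *v e) = 0" using guard_\<alpha> Ae by simp
  qed
  have kernel: "z = 0" if "guard B z = 0" "guard B (A *v z) = 0" for z
  proof -
    obtain c1 c2 where z: "z = c1 *\<^sub>R b1 + c2 *\<^sub>R b2" using basis by blast
    have "guard B b1 \<noteq> 0" "guard B b2 \<noteq> 0" using assms(8,9) by (simp_all add: guard_def)
    then show ?thesis using guard_pair_injective[OF assms(5,7) distinct _ _ z that] by blast
  qed
  show ?thesis
    unfolding NT_half_planes e_def[symmetric]
    using open_cone_of_two_functionals[OF linear_guard linear_guard_iterate guard_\<alpha> guard_e kernel]
    by blast
qed

end
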